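(* Let $\Pi=\Pi_1\times\cdots\times\Pi_T$ be a class of dynamic treatment regimes such that for every $t=1,\dots,T$, $N_{d_h}(\epsilon,\Pi_t)\le C\exp(D(1/\epsilon)^\omega)$ for all $\epsilon>0$, for some constants $C,D>0$ and $0<\omega<0.5$. Then $\kappa(\Pi)<\infty$.
   Context: For each stage $t$, $\mathcal{H}_t$ is a history space whose elements are $h_t=(\underline a_{t-1},\underline s_t)$, and for $\ell\le t$ the sub-history $h_\ell=(\underline a_{\ell-1},\underline s_\ell)\in\mathcal{H}_\ell$. $\Pi_t$ is a class of measurable maps $\pi_t:\mathcal{H}_t\to\mathcal{A}_t$ (finite action set); $\Pi_{s:t}=\Pi_s\times\cdots\times\Pi_t$ with elements $\pi_{s:t}=(\pi_s,\dots,\pi_t)$, and $\Pi=\Pi_{1:T}$. Given points $h_t^{(1)},\dots,h_t^{(n)}\in\mathcal{H}_t$, the Hamming distance is $d_h(\pi_{s:t},\pi'_{s:t})=n^{-1}\sum_{i=1}^n\mathbf{1}\{\pi_s(h_s^{(i)})\ne\pi'_s(h_s^{(i)})\vee\cdots\vee\pi_t(h_t^{(i)})\ne\pi'_t(h_t^{(i)})\}$; $N_{d_h}(\epsilon,\Pi_{s:t},\{h_t^{(i)}\})$ is the smallest number of elements of $\Pi_{s:t}$ such that every element of $\Pi_{s:t}$ is within $d_h$-distance $\epsilon$ of one of them; $N_{d_h}(\epsilon,\Pi_{s:t})$ is the supremum of this over all $n\ge1$ and all $h_t^{(1)},\dots,h_t^{(n)}\in\mathcal{H}_t$. The entropy integral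 is $\kappa(\Pi_{s:t})=\int_0^1\sqrt{\log N_{d_h}(\epsilon^2,\Pi_{s:t})}\,d\epsilon$ and $\kappa(\Pi)=\kappa(\Pi_{1:T})$. *)

theory Defs
  imports "HOL-Analysis.Analysis" "HOL-Library.FuncSet"
begin

text \<open>Stages are numbered 1, ..., T. A stage-t history h_t = (a_1..a_{t-1}, s_1..s_t)
  is represented as a pair of lists (actions, states) with the action at stage i
  in A i and the state at stage i in S i.\<close>

type_synonym ('a,'s) history = "'a list \<times> 's list"
type_synonym ('a,'s) policy = "('a,'s) history \<Rightarrow> 'a"

definition hist :: "(nat \<Rightarrow> 's set) \<Rightarrow> (nat \<Rightarrow> 'a set) \<Rightarrow> nat \<Rightarrow> ('a,'s) history set" where
  "hist S A t = {(as, ss). length as = t - 1 \<and> length ss = t \<and>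
      (\<forall>i < t - 1. as ! i \<in> A (Suc i)) \<and> (\<forall>i < t. ss ! i \<in> S (Suc i))}"

definition subhist :: "nat \<Rightarrow> ('a,'s) history \<Rightarrow> ('a,'s) history" where
  "subhist l h = (take (l - 1) (fst h), take l (snd h))"

text \<open>Policy class Pi_{s:t} = Pi_s x ... x Pi_t, tuples as extensional functions on {s..t}.\<close>
definition polclass :: "(nat \<Rightarrow> ('a,'s) policy set) \<Rightarrow> nat \<Rightarrow> nat \<Rightarrow> (nat \<Rightarrow> ('a,'s) policy) set" where
  "polclass Pols s t = PiE {s..t} Pols"

definition hamming :: "nat \<Rightarrow> nat \<Rightarrow> ('a,'s) history list \<Rightarrow>
    (nat \<Rightarrow> ('a,'s) policy) \<Rightarrow> (nat \<Rightarrow> ('a,'s) policy) \<Rightarrow> real" where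
  "hamming s t xs p q = (1 / real (length xs)) *
     (\<Sum>i<length xs. if (\<exists>k\<in>{s..t}. p k (subhist k (xs ! i)) \<noteq> q k (subhist k (xs ! i)))
                     then 1 else 0)"

text \<open>Covering number N_{d_h}(eps, Pi_{s:t}, {h_t^(i)}) (infinite if no finite cover).\<close>
definition covnum_pts :: "real \<Rightarrow> (nat \<Rightarrow> ('a,'s) policy set) \<Rightarrow> nat \<Rightarrow> nat \<Rightarrow>
    ('a,'s) history list \<Rightarrow> ennreal" where
  "covnum_pts eps Pols s t xs =
     (INF C \<in> {C. finite C \<and> C \<subseteq> polclass Pols s t \<and>
                 (\<forall>p \<in> polclass Pols s t. \<exists>c \<in> C. hamming s t xs p c \<le> eps)}.
        of_nat (card C))"

definition covnum :: "(nat \<Rightarrow> 's set) \<Rightarrow> (nat \<Rightarrow> 'a set) \<Rightarrow> real \<Rightarrow>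
    (nat \<Rightarrow> ('a,'s) policy set) \<Rightarrow> nat \<Rightarrow> nat \<Rightarrow> ennreal" where
  "covnum S A eps Pols s t =
     (SUP xs \<in> {xs. xs \<noteq> [] \<and> set xs \<subseteq> hist S A t}. covnum_pts eps Pols s t xs)"

text \<open>Entropy integral kappa(Pi_{s:t}) = int_0^1 sqrt(log N(eps^2, Pi_{s:t})) d eps
  (natural log; value \<infinity> wherever the covering number is infinite).\<close>
definition entropy_integral :: "(nat \<Rightarrow> 's set) \<Rightarrow> (nat \<Rightarrow> 'a set) \<Rightarrow>
    (nat \<Rightarrow> ('a,'s) policy set) \<Rightarrow> nat \<Rightarrow> nat \<Rightarrow> ennreal" where
  "entropy_integral S A Pols s t =
     (\<integral>\<^sup>+ eps \<in> {0..1}.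
        (let N = covnum S A (eps\<^sup>2) Pols s t in
         if N = \<infinity> then \<infinity> else ennreal (sqrt (ln (enn2real N)))) \<partial>lborel)"

end

theory Submission
  imports Defs
begin

text \<open>A product of stage-wise covers is a cover of the product class: by the union bound the
  Hamming distance on \<open>\<Pi>\<^sub>1 \<times> \<dots> \<times> \<Pi>\<^sub>T\<close> is at most the sum of the stage-wise Hamming distances,
  so covering every stage at radius \<open>\<epsilon>\<^sup>2/T\<close> covers \<open>\<Pi>\<close> at radius \<open>\<epsilon>\<^sup>2\<close> with at most
  \<open>(C exp(D (T/\<epsilon>\<^sup>2)\<^sup>\<omega>))\<^sup>T\<close> elements. Hence \<open>\<surd>(log N(\<epsilon>\<^sup>2, \<Pi>))\<close> is bounded by
  \<open>a + b \<epsilon>\<^sup>-\<^sup>\<omega>\<close>, which is integrable on \<open>[0,1]\<close> because \<open>\<omega> < 1\<close>.\<close>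

lemma subhist_subhist [simp]: "subhist k (subhist k h) = subhist k h"
  by (simp add: subhist_def)

lemma subhist_in_hist:
  assumes "h \<in> hist S A t" "k \<le> t"
  shows "subhist k h \<in> hist S A k"
  using assms by (auto simp: hist_def subhist_def)

lemma hamming_cong:
  assumes "\<And>k. k \<in> {s..t} \<Longrightarrow> p k = p' k" "\<And>k. k \<in> {s..t} \<Longrightarrow> q k = q' k"
  shows "hamming s t xs p q = hamming s t xs p' q'"
  using assms by (simp add: hamming_def)

lemma hamming_le_sum_stages:
  "hamming s t xs p q \<le> (\<Sum>k\<in>{s..t}. hamming k k (map (subhist k) xs) p q)"
proof -
  let ?differ = "\<lambda>k i. p k (subhist k (xs ! i)) \<noteq> q k (subhist k (xs ! i))"
  have union_bound: "(if \<exists>k\<in>{s..t}. ?differ k i then 1 else 0)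
      \<le> (\<Sum>k\<in>{s..t}. if ?differ k i then 1 else 0 :: real)" for i
  proof (cases "\<exists>k\<in>{s..t}. ?differ k i")
    case True
    then obtain k where "k \<in> {s..t}" "?differ k i" by blast
    then have "1 \<le> (\<Sum>k\<in>{s..t}. if ?differ k i then 1 else 0 :: real)"
      using member_le_sum[of k "{s..t}" "\<lambda>k. if ?differ k i then 1 else 0 :: real"] by simp
    with True show ?thesis by simp
  qed (simp add: sum_nonneg)
  have "hamming s t xs p q
      \<le> 1 / real (length xs) * (\<Sum>i<length xs. \<Sum>k\<in>{s..t}. if ?differ k i then 1 else 0)"
    unfolding hamming_def by (intro mult_left_mono sum_mono union_bound) auto
  also have "\<dots> = (\<Sum>k\<in>{s..t}. hamming k k (map (subhist k) xs) p q)"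
    by (simp add: hamming_def sum.swap[of _ "{..<length xs}"] sum_distrib_left)
  finally show ?thesis .
qed

lemma covnum_pts_le_obtains_cover:
  assumes "covnum_pts eps Pols s t xs \<le> ennreal K" "K \<ge> 0"
  obtains Cv where "finite Cv" "Cv \<subseteq> polclass Pols s t"
    "\<forall>p\<in>polclass Pols s t. \<exists>c\<in>Cv. hamming s t xs p c \<le> eps" "real (card Cv) \<le> K"
proof -
  define covers where "covers = {Cv. finite Cv \<and> Cv \<subseteq> polclass Pols s t \<and>
      (\<forall>p\<in>polclass Pols s t. \<exists>c\<in>Cv. hamming s t xs p c \<le> eps)}"
  have eq: "covnum_pts eps Pols s t xs = (INF Cv\<in>covers. of_nat (card Cv))"
    by (simp add: covnum_pts_def covers_def)
  have "covers \<noteq> {}"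
    using assms(1) by (auto simp: eq top_unique)
  then obtain Cv where Cv: "Cv \<in> covers"
    and least: "\<And>Cv'. Cv' \<in> covers \<Longrightarrow> card Cv \<le> card Cv'"
    using ex_has_least_nat[of "\<lambda>Cv. Cv \<in> covers" _ card] by blast
  have "of_nat (card Cv) \<le> covnum_pts eps Pols s t xs"
    unfolding eq by (rule INF_greatest) (simp add: least)
  with assms(1) have "ennreal (real (card Cv)) \<le> ennreal K"
    by (metis ennreal_of_nat_eq_real_of_nat order_trans)
  with assms(2) have "real (card Cv) \<le> K"
    by simp
  with Cv that show ?thesis
    unfolding covers_def by blast
qed

lemma product_of_stage_covers:
  fixes s t :: nat and Cs :: "nat \<Rightarrow> (nat \<Rightarrow> ('a,'s) policy) set"
  defines "join \<equiv> \<lambda>f. restrict (\<lambda>k. f k k) {s..t}"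
  assumes covers: "\<And>k. k \<in> {s..t} \<Longrightarrow> Cs k \<subseteq> polclass Pols k k \<and>
      (\<forall>p\<in>polclass Pols k k. \<exists>c\<in>Cs k. hamming k k (map (subhist k) xs) p c \<le> r)"
    and radius: "real (card {s..t}) * r \<le> eps"
  shows "join ` PiE {s..t} Cs \<subseteq> polclass Pols s t"
    and "\<forall>p\<in>polclass Pols s t. \<exists>c\<in>join ` PiE {s..t} Cs. hamming s t xs p c \<le> eps"
proof -
  show "join ` PiE {s..t} Cs \<subseteq> polclass Pols s t"
  proof
    fix g assume "g \<in> join ` PiE {s..t} Cs"
    then obtain f where g: "g = join f" and f: "f \<in> PiE {s..t} Cs" by blast
    have "f k k \<in> Pols k" if k: "k \<in> {s..t}" for k
    proof -
      have "f k \<in> polclass Pols k k"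
        using PiE_mem[OF f k] covers[OF k] by blast
      then show ?thesis
        unfolding polclass_def by (rule PiE_mem) simp
    qed
    then show "g \<in> polclass Pols s t"
      unfolding g join_def polclass_def restrict_PiE_iff by blast
  qed
  show "\<forall>p\<in>polclass Pols s t. \<exists>c\<in>join ` PiE {s..t} Cs. hamming s t xs p c \<le> eps"
  proof
    fix p assume p: "p \<in> polclass Pols s t"
    have "\<exists>c\<in>Cs k. hamming k k (map (subhist k) xs) p c \<le> r" if k: "k \<in> {s..t}" for k
    proof -
      have "restrict p {k} \<in> polclass Pols k k"
        using PiE_mem[OF p[unfolded polclass_def] k]
        unfolding polclass_def restrict_PiE_iff by simp
      then obtain c where "c \<in> Cs k" "hamming k k (map (subhist k) xs) (restrict p {k}) c \<le> r"
        using covers[OF k] by blast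
      moreover have "hamming k k (map (subhist k) xs) (restrict p {k}) c
          = hamming k k (map (subhist k) xs) p c"
        by (rule hamming_cong) auto
      ultimately show ?thesis by auto
    qed
    then obtain c where c: "\<And>k. k \<in> {s..t} \<Longrightarrow>
        c k \<in> Cs k \<and> hamming k k (map (subhist k) xs) p (c k) \<le> r"
      by metis
    have "hamming s t xs p (join c)
        \<le> (\<Sum>k\<in>{s..t}. hamming k k (map (subhist k) xs) p (join c))"
      by (rule hamming_le_sum_stages)
    also have "\<dots> = (\<Sum>k\<in>{s..t}. hamming k k (map (subhist k) xs) p (c k))"
      by (intro sum.cong refl hamming_cong) (auto simp: join_def)
    also have "\<dots> \<le> (\<Sum>k\<in>{s..t}. r)"
      using c by (intro sum_mono) auto
    also have "\<dots> \<le> eps"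
      using radius by simp
    finally have "hamming s t xs p (join c) \<le> eps" .
    moreover have "join c = join (restrict c {s..t})"
      unfolding join_def by (rule restrict_ext) simp
    moreover have "restrict c {s..t} \<in> PiE {s..t} Cs"
      using c by auto
    ultimately show "\<exists>c\<in>join ` PiE {s..t} Cs. hamming s t xs p c \<le> eps"
      by (metis image_eqI)
  qed
qed

lemma covnum_product_le:
  assumes radius: "real (card {s..t}) * r \<le> eps"
    and stage_bound: "\<And>k. k \<in> {s..t} \<Longrightarrow> covnum S A r Pols k k \<le> ennreal (K k)"
    and K_nonneg: "\<And>k. k \<in> {s..t} \<Longrightarrow> K k \<ge> 0"
  shows "covnum S A eps Pols s t \<le> ennreal (\<Prod>k\<in>{s..t}. K k)"
  unfolding covnum_def
proof (rule SUP_least, safe)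
  fix xs assume xs: "xs \<noteq> []" "set xs \<subseteq> hist S A t"
  have "\<exists>Cv. finite Cv \<and> Cv \<subseteq> polclass Pols k k \<and>
      (\<forall>p\<in>polclass Pols k k. \<exists>c\<in>Cv. hamming k k (map (subhist k) xs) p c \<le> r) \<and>
      real (card Cv) \<le> K k" if k: "k \<in> {s..t}" for k
  proof -
    have "subhist k h \<in> hist S A k" if "h \<in> set xs" for h
      using xs(2) k that by (intro subhist_in_hist) auto
    then have "map (subhist k) xs \<in> {xs. xs \<noteq> [] \<and> set xs \<subseteq> hist S A k}"
      using xs(1) by (simp add: image_subset_iff)
    then have "covnum_pts r Pols k k (map (subhist k) xs) \<le> covnum S A r Pols k k"
      unfolding covnum_def by (rule SUP_upper)
    also have "\<dots> \<le> ennreal (K k)"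
      using stage_bound[OF k] .
    finally obtain Cv where "finite Cv" "Cv \<subseteq> polclass Pols k k"
        "\<forall>p\<in>polclass Pols k k. \<exists>c\<in>Cv. hamming k k (map (subhist k) xs) p c \<le> r"
        "real (card Cv) \<le> K k"
      using K_nonneg[OF k] by (rule covnum_pts_le_obtains_cover)
    then show ?thesis
      by blast
  qed
  then obtain Cs where Cs: "\<And>k. k \<in> {s..t} \<Longrightarrow> finite (Cs k) \<and> Cs k \<subseteq> polclass Pols k k \<and>
      (\<forall>p\<in>polclass Pols k k. \<exists>c\<in>Cs k. hamming k k (map (subhist k) xs) p c \<le> r) \<and>
      real (card (Cs k)) \<le> K k"
    by metis
  let ?Cv = "(\<lambda>f. restrict (\<lambda>k. f k k) {s..t}) ` PiE {s..t} Cs"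
  have finite_PiE_Cs: "finite (PiE {s..t} Cs)"
    using Cs by (intro finite_PiE) auto
  have "real (card ?Cv) \<le> real (card (PiE {s..t} Cs))"
    using card_image_le[OF finite_PiE_Cs] by simp
  also have "\<dots> = (\<Prod>k\<in>{s..t}. real (card (Cs k)))"
    by (simp add: card_PiE)
  also have "\<dots> \<le> (\<Prod>k\<in>{s..t}. K k)"
    using Cs by (intro prod_mono) auto
  finally have card_Cv: "real (card ?Cv) \<le> (\<Prod>k\<in>{s..t}. K k)" .
  have "covnum_pts eps Pols s t xs \<le> of_nat (card ?Cv)"
    unfolding covnum_pts_def
    using product_of_stage_covers[of s t Cs Pols xs r eps] Cs radius finite_PiE_Cs
    by (intro INF_lower) auto
  also have "\<dots> \<le> ennreal (\<Prod>k\<in>{s..t}. K k)"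
    using card_Cv by (simp add: ennreal_of_nat_eq_real_of_nat ennreal_leI)
  finally show "covnum_pts eps Pols s t xs \<le> ennreal (\<Prod>k\<in>{s..t}. K k)" .
qed

lemma entropy_integral_le_nn_integral:
  assumes "\<And>e. 0 < e \<Longrightarrow> e \<le> 1 \<Longrightarrow>
      0 \<le> g e \<and> covnum S A (e\<^sup>2) Pols s t \<le> ennreal (exp ((g e)\<^sup>2))"
  shows "entropy_integral S A Pols s t \<le> (\<integral>\<^sup>+ e \<in> {0..1}. ennreal (g e) \<partial>lborel)"
proof -
  define integrand where "integrand e = (let N = covnum S A (e\<^sup>2) Pols s t in
      if N = \<infinity> then \<infinity> else ennreal (sqrt (ln (enn2real N))))" for e
  have integrand_le: "integrand e \<le> ennreal (g e)" if e: "0 < e" "e \<le> 1" for e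
  proof -
    define N where "N = covnum S A (e\<^sup>2) Pols s t"
    have g: "0 \<le> g e" and N: "N \<le> ennreal (exp ((g e)\<^sup>2))"
      using assms[OF e] unfolding N_def by auto
    have "N \<noteq> \<infinity>"
      using le_less_trans[OF N ennreal_less_top] by simp
    have ln_N: "ln (enn2real N) \<le> (g e)\<^sup>2"
    proof (cases "enn2real N = 0")
      case False
      then have "0 < enn2real N"
        using enn2real_nonneg[of N] by linarith
      moreover have "enn2real N \<le> exp ((g e)\<^sup>2)"
        using N by (intro enn2real_leI) auto
      ultimately show ?thesis
        using ln_le_cancel_iff[of "enn2real N" "exp ((g e)\<^sup>2)"] by simp
    qed simp
    have "sqrt (ln (enn2real N)) \<le> g e"
      using real_sqrt_le_mono[OF ln_N] g by simp
    with \<open>N \<noteq> \<infinity>\<close> show ?thesis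
      unfolding integrand_def N_def[symmetric] Let_def by (simp add: ennreal_leI)
  qed
  have "AE e in lborel. e \<noteq> 0"
    by (rule AE_lborel_singleton)
  then have "AE e in lborel. integrand e * indicator {0..1} e \<le> ennreal (g e) * indicator {0..1} e"
    by eventually_elim (auto simp: indicator_def intro!: integrand_le)
  then show ?thesis
    unfolding entropy_integral_def integrand_def[symmetric] by (rule nn_integral_mono_AE)
qed

lemma nn_integral_powr_finite:
  fixes a b w :: real
  assumes "0 \<le> a" "0 \<le> b" "0 \<le> w" "w < 1"
  shows "(\<integral>\<^sup>+ x \<in> {0..1}. ennreal (a + b * x powr -w) \<partial>lborel) < \<infinity>"
proof -
  have "((\<lambda>x. x powr -w) has_integral (1 powr (-w + 1) / (-w + 1))) {0..1::real}"
    using assms by (intro has_integral_powr_from_0) auto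
  then obtain I where "((\<lambda>x. a + b * x powr -w) has_integral I) {0..1::real}"
    using has_integral_add[OF has_integral_const_real has_integral_mult_right] by blast
  then have "(\<integral>\<^sup>+ x \<in> {0..1}. ennreal (a + b * x powr -w) \<partial>lborel) = ennreal I"
    using assms by (intro nn_integral_has_integral_lebesgue') auto
  then show ?thesis
    by simp
qed

lemma divide_square_powr:
  fixes e T w :: real
  assumes "0 < e" "0 < T"
  shows "(T / e\<^sup>2) powr w = T powr w * (e powr -w)\<^sup>2"
proof -
  have "(T / e\<^sup>2) powr w = (T / (e * e)) powr w"
    by (simp add: power2_eq_square)
  also have "\<dots> = T powr w / (e powr w * e powr w)"
    using assms by (simp add: powr_divide powr_mult)
  finally show ?thesis
    by (simp add: powr_minus power2_eq_square divide_inverse)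
qed

lemma stage_bound_power_le_exp_square:
  fixes T :: nat and C D w e :: real
  assumes "0 < C" "0 \<le> D" "0 < e"
  shows "(C * exp (D * (T / e\<^sup>2) powr w)) ^ T
    \<le> exp ((sqrt (T * \<bar>ln C\<bar>) + sqrt (T * D * T powr w) * e powr -w)\<^sup>2)"
proof (cases "T = 0")
  case False
  define a where "a = T * \<bar>ln C\<bar>"
  define b where "b = T * D * T powr w"
  define y where "y = e powr -w"
  have a: "0 \<le> a" and b: "0 \<le> b" and y: "0 \<le> y"
    using assms by (simp_all add: a_def b_def y_def)
  have "C * exp (D * (T / e\<^sup>2) powr w) = exp (ln C + D * T powr w * y\<^sup>2)"
    using assms False by (simp add: exp_add divide_square_powr y_def)
  then have "(C * exp (D * (T / e\<^sup>2) powr w)) ^ T = exp (T * ln C + b * y\<^sup>2)"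
    by (simp add: exp_of_nat_mult[symmetric] b_def algebra_simps)
  also have "\<dots> \<le> exp (a + b * y\<^sup>2)"
    unfolding a_def by (simp add: mult_left_mono)
  also have "\<dots> \<le> exp ((sqrt a + sqrt b * y)\<^sup>2)"
    using a b y by (simp add: power2_sum power_mult_distrib)
  finally show ?thesis
    unfolding a_def b_def y_def .
qed simp

theorem lemma2:
  fixes S :: "nat \<Rightarrow> 's set" and A :: "nat \<Rightarrow> 'a set"
    and Pols :: "nat \<Rightarrow> ('a,'s) policy set" and T :: nat
    and C D \<omega> :: real
  assumes "\<forall>t\<in>{1..T}. finite (A t)"
    and "\<forall>t\<in>{1..T}. \<forall>p\<in>Pols t. \<forall>h\<in>hist S A t. p h \<in> A t"
    and "C > 0" and "D > 0" and "0 < \<omega>" and "\<omega> < 0.5"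
    and "\<forall>t\<in>{1..T}. \<forall>eps>0.
           covnum S A eps Pols t t \<le> ennreal (C * exp (D * (1 / eps) powr \<omega>))"
  shows "entropy_integral S A Pols 1 T < \<infinity>"
proof -
  note C = assms(3) and D = assms(4) and stage_covnum = assms(7)
  define g where "g e = sqrt (T * \<bar>ln C\<bar>) + sqrt (T * D * T powr \<omega>) * e powr -\<omega>" for e
  have "entropy_integral S A Pols 1 T \<le> (\<integral>\<^sup>+ e \<in> {0..1}. ennreal (g e) \<partial>lborel)"
  proof (rule entropy_integral_le_nn_integral)
    fix e :: real assume e: "0 < e" "e \<le> 1"
    have "covnum S A (e\<^sup>2) Pols 1 T
        \<le> ennreal (\<Prod>k\<in>{1..T}. C * exp (D * (1 / (e\<^sup>2 / T)) powr \<omega>))"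
    proof (rule covnum_product_le)
      fix k assume k: "k \<in> {1..T}"
      then have "0 < e\<^sup>2 / T"
        using e by auto
      with k show "covnum S A (e\<^sup>2 / T) Pols k k
          \<le> ennreal (C * exp (D * (1 / (e\<^sup>2 / T)) powr \<omega>))"
        using stage_covnum by blast
    qed (use C e in auto)
    also have "\<dots> \<le> ennreal (exp ((g e)\<^sup>2))"
      using stage_bound_power_le_exp_square[OF C less_imp_le[OF D] e(1)]
      by (simp add: g_def ennreal_leI)
    finally show "0 \<le> g e \<and> covnum S A (e\<^sup>2) Pols 1 T \<le> ennreal (exp ((g e)\<^sup>2))"
      using D by (simp add: g_def)
  qed
  also have "\<dots> < \<infinity>"
    unfolding g_def by (rule nn_integral_powr_finite) (use D assms(5,6) in auto)
  finally show ?thesis .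
qed

end
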